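(* For every co-comparability graph $G$, $\operatorname{box}(G)\le 2\Delta(G)+1$, where $\Delta(G)$ is the maximum degree of $G$.
   Context: A comparability graph is a graph whose vertex set admits a partial order such that two distinct vertices are adjacent iff they are comparable; $G$ is a co-comparability graph if its complement is a comparability graph. The boxicity $\operatorname{box}(G)$ is the minimum $b$ such that $G$ is the intersection graph of axis-parallel boxes in $\mathbb{R}^b$ (products of $b$ closed intervals), one box per vertex. *)

theory Defs
  imports Complex_Main
begin

definition simple_graph :: "'a set \<Rightarrow> ('a \<Rightarrow> 'a \<Rightarrow> bool) \<Rightarrow> bool" where
  "simple_graph V E \<longleftrightarrow> finite V \<and>
     (\<forall>u v. E u v \<longrightarrow> u \<in> V \<and> v \<in> V \<and> u \<noteq> v \<and> E v u)"

definition comparability_graph :: "'a set \<Rightarrow> ('a \<Rightarrow> 'a \<Rightarrow> bool) \<Rightarrow> bool" where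
  "comparability_graph V E \<longleftrightarrow> (\<exists>r. partial_order_on V r \<and>
     (\<forall>u\<in>V. \<forall>v\<in>V. u \<noteq> v \<longrightarrow> (E u v \<longleftrightarrow> (u, v) \<in> r \<or> (v, u) \<in> r)))"

definition graph_complement :: "'a set \<Rightarrow> ('a \<Rightarrow> 'a \<Rightarrow> bool) \<Rightarrow> 'a \<Rightarrow> 'a \<Rightarrow> bool" where
  "graph_complement V E u v \<longleftrightarrow> u \<in> V \<and> v \<in> V \<and> u \<noteq> v \<and> \<not> E u v"

definition cocomparability_graph :: "'a set \<Rightarrow> ('a \<Rightarrow> 'a \<Rightarrow> bool) \<Rightarrow> bool" where
  "cocomparability_graph V E \<longleftrightarrow> comparability_graph V (graph_complement V E)"

text \<open>The axis-parallel box in R^b with lower corner lo and upper corner hi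
  (points of R^b represented as functions nat => real, only coordinates < b matter).\<close>
definition box_set :: "nat \<Rightarrow> (nat \<Rightarrow> real) \<Rightarrow> (nat \<Rightarrow> real) \<Rightarrow> (nat \<Rightarrow> real) set" where
  "box_set b lo hi = {x. \<forall>i<b. lo i \<le> x i \<and> x i \<le> hi i}"

definition box_representable :: "'a set \<Rightarrow> ('a \<Rightarrow> 'a \<Rightarrow> bool) \<Rightarrow> nat \<Rightarrow> bool" where
  "box_representable V E b \<longleftrightarrow> (\<exists>lo hi :: 'a \<Rightarrow> nat \<Rightarrow> real.
     (\<forall>v\<in>V. \<forall>i<b. lo v i \<le> hi v i) \<and>
     (\<forall>u\<in>V. \<forall>v\<in>V. u \<noteq> v \<longrightarrow>
        (E u v \<longleftrightarrow> box_set b (lo u) (hi u) \<inter> box_set b (lo v) (hi v) \<noteq> {})))"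

definition boxicity :: "'a set \<Rightarrow> ('a \<Rightarrow> 'a \<Rightarrow> bool) \<Rightarrow> nat" where
  "boxicity V E = (LEAST b. box_representable V E b)"

definition degree :: "'a set \<Rightarrow> ('a \<Rightarrow> 'a \<Rightarrow> bool) \<Rightarrow> 'a \<Rightarrow> nat" where
  "degree V E v = card {u \<in> V. E v u}"

text \<open>Maximum degree (0 for the empty graph).\<close>
definition max_degree :: "'a set \<Rightarrow> ('a \<Rightarrow> 'a \<Rightarrow> bool) \<Rightarrow> nat" where
  "max_degree V E = Max (insert 0 (degree V E ` V))"

end

theory Submission
  imports Defs
begin

text \<open>Colour \<open>G\<close> greedily with \<open>\<Delta>(G) + 1\<close> colours. A colour class is independent in \<open>G\<close>,
  hence a clique of the complement, i.e. a chain of the partial order. Each chain \<open>C\<close> yields an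
  interval representation of a supergraph of \<open>G\<close> in which every comparable pair meeting \<open>C\<close>
  is separated: the elements of \<open>C\<close> become the points \<open>0, 1, 2, \<dots>\<close> in chain order, and a
  vertex outside \<open>C\<close> spans the gap between the chain elements below it and those above it.
  Taking one coordinate per colour class gives \<open>box(G) \<le> \<Delta>(G) + 1 \<le> 2\<Delta>(G) + 1\<close>.\<close>

lemma ex_colour_not_in_image:
  fixes f :: "'a \<Rightarrow> nat"
  assumes "finite N" and "card N \<le> d"
  shows "\<exists>c\<le>d. c \<notin> f ` N"
proof -
  have "card (f ` N) < card {0..d}"
    using card_image_le[OF assms(1), of f] assms(2) by simp
  then have "\<not> {0..d} \<subseteq> f ` N"
    using card_mono[OF finite_imageI[OF assms(1)]] by (meson not_le)
  then show ?thesis by auto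
qed

lemma degree_le_max_degree:
  assumes "finite V" and "v \<in> V"
  shows "degree V E v \<le> max_degree V E"
  unfolding max_degree_def using assms by (intro Max_ge) auto

lemma simple_graph_greedy_colouring:
  assumes G: "simple_graph V E" and deg: "\<And>v. v \<in> V \<Longrightarrow> degree V E v \<le> d"
  shows "\<exists>f :: 'a \<Rightarrow> nat. (\<forall>v\<in>V. f v \<le> d) \<and> (\<forall>u\<in>V. \<forall>v\<in>V. E u v \<longrightarrow> f u \<noteq> f v)"
proof -
  have fin: "finite V" and irrefl_sym: "\<And>u v. E u v \<Longrightarrow> u \<noteq> v \<and> E v u"
    using G unfolding simple_graph_def by auto
  have "\<exists>f :: 'a \<Rightarrow> nat. (\<forall>v\<in>S. f v \<le> d) \<and> (\<forall>u\<in>S. \<forall>v\<in>S. E u v \<longrightarrow> f u \<noteq> f v)"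
    if "S \<subseteq> V" for S
    using finite_subset[OF that fin] that
  proof (induction S rule: finite_subset_induct')
    case empty
    show ?case by simp
  next
    case (insert x S)
    obtain f :: "'a \<Rightarrow> nat" where f_le: "\<forall>v\<in>S. f v \<le> d"
      and f_proper: "\<forall>u\<in>S. \<forall>v\<in>S. E u v \<longrightarrow> f u \<noteq> f v"
      using insert.IH by blast
    let ?N = "{u\<in>S. E x u}"
    have "card ?N \<le> degree V E x"
      unfolding degree_def using insert.hyps fin by (intro card_mono) auto
    then obtain c where "c \<le> d" and c_free: "c \<notin> f ` ?N"
      using ex_colour_not_in_image[of ?N d f] deg[OF \<open>x \<in> V\<close>] insert.hyps(1) by auto
    have "(f(x := c)) u \<noteq> (f(x := c)) v"
      if "u \<in> insert x S" "v \<in> insert x S" "E u v" for u v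
      using that f_proper c_free irrefl_sym[OF that(3)] \<open>x \<notin> S\<close>
      by (cases "u = x"; cases "v = x") auto
    with \<open>c \<le> d\<close> f_le show ?case
      by (intro exI[of _ "f(x := c)"]) auto
  qed
  then show ?thesis by blast
qed

definition chain_below :: "'a rel \<Rightarrow> 'a set \<Rightarrow> 'a \<Rightarrow> 'a set" where
  "chain_below r C x = {c\<in>C. (c, x) \<in> r \<and> c \<noteq> x}"

definition chain_above :: "'a rel \<Rightarrow> 'a set \<Rightarrow> 'a \<Rightarrow> 'a set" where
  "chain_above r C x = {c\<in>C. (x, c) \<in> r \<and> c \<noteq> x}"

definition chain_lo :: "'a rel \<Rightarrow> 'a set \<Rightarrow> 'a \<Rightarrow> real" where
  "chain_lo r C x = real (card (chain_below r C x)) - (if x \<in> C then 0 else 1/2)"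

definition chain_hi :: "'a rel \<Rightarrow> 'a set \<Rightarrow> 'a \<Rightarrow> real" where
  "chain_hi r C x = real (card C) - real (card (chain_above r C x)) - (if x \<in> C then 1 else 1/2)"

lemma chain_lo_le_hi:
  assumes "finite C" and "trans r" and "antisym r"
    and not_below: "\<not> ((y, x) \<in> r \<and> y \<noteq> x)"
  shows "chain_lo r C x \<le> chain_hi r C y"
proof -
  define S where "S = (if x \<in> C then {x} else if y \<in> C then {y} else {})"
  have "chain_below r C x \<inter> chain_above r C y = {}"
    using not_below assms(2,3) unfolding chain_below_def chain_above_def antisym_def trans_def
    by blast
  moreover have "(chain_below r C x \<union> chain_above r C y) \<inter> S = {}"
    using not_below unfolding chain_below_def chain_above_def S_def by auto
  moreover have sub: "chain_below r C x \<union> chain_above r C y \<union> S \<subseteq> C"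
    unfolding chain_below_def chain_above_def S_def by auto
  ultimately have "card (chain_below r C x) + card (chain_above r C y) + card S \<le> card C"
    using card_mono[OF \<open>finite C\<close> sub] finite_subset[OF sub \<open>finite C\<close>]
    by (simp add: card_Un_disjoint)
  then show ?thesis
    unfolding chain_lo_def chain_hi_def S_def by (auto split: if_splits)
qed

lemma chain_hi_less_lo:
  assumes "finite C" and "trans r" and "antisym r" and "C \<in> Chains r"
    and below: "(x, y) \<in> r" "x \<noteq> y" and meets: "x \<in> C \<or> y \<in> C"
  shows "chain_hi r C x < chain_lo r C y"
proof -
  have "C \<subseteq> chain_below r C y \<union> chain_above r C x"
    using assms(2-4) below meets
    unfolding Chains_def chain_below_def chain_above_def antisym_def trans_def by blast
  then have "card C \<le> card (chain_below r C y \<union> chain_above r C x)"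
    using \<open>finite C\<close> by (intro card_mono) (auto simp: chain_below_def chain_above_def)
  also have "\<dots> \<le> card (chain_below r C y) + card (chain_above r C x)"
    by (rule card_Un_le)
  finally show ?thesis
    using meets unfolding chain_lo_def chain_hi_def by (auto split: if_splits)
qed

lemma box_set_Int_nonempty_iff:
  assumes "\<forall>i<b. lo i \<le> hi i" and "\<forall>i<b. lo' i \<le> hi' i"
  shows "box_set b lo hi \<inter> box_set b lo' hi' \<noteq> {} \<longleftrightarrow> (\<forall>i<b. lo i \<le> hi' i \<and> lo' i \<le> hi i)"
proof
  assume "box_set b lo hi \<inter> box_set b lo' hi' \<noteq> {}"
  then show "\<forall>i<b. lo i \<le> hi' i \<and> lo' i \<le> hi i"
    unfolding box_set_def by force
next
  assume "\<forall>i<b. lo i \<le> hi' i \<and> lo' i \<le> hi i"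
  then have "(\<lambda>i. max (lo i) (lo' i)) \<in> box_set b lo hi \<inter> box_set b lo' hi'"
    using assms unfolding box_set_def by auto
  then show "box_set b lo hi \<inter> box_set b lo' hi' \<noteq> {}" by blast
qed

lemma box_representable_by_chain_colouring:
  fixes f :: "'a \<Rightarrow> nat"
  assumes "finite V" and "trans r" and "antisym r"
    and incomparable: "\<And>u v. u \<in> V \<Longrightarrow> v \<in> V \<Longrightarrow> u \<noteq> v \<Longrightarrow> E u v \<longleftrightarrow> (u, v) \<notin> r \<and> (v, u) \<notin> r"
    and colours: "\<And>v. v \<in> V \<Longrightarrow> f v < b"
    and chains: "\<And>i. {v\<in>V. f v = i} \<in> Chains r"
  shows "box_representable V E b"
proof -
  define C where "C i = {v\<in>V. f v = i}" for i
  define lo where "lo v i = chain_lo r (C i) v" for v i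
  define hi where "hi v i = chain_hi r (C i) v" for v i
  have finite_C: "finite (C i)" for i
    using \<open>finite V\<close> unfolding C_def by simp
  have lo_le_hi: "\<forall>i<b. lo u i \<le> hi v i" if "\<not> ((v, u) \<in> r \<and> v \<noteq> u)" for u v
    unfolding lo_def hi_def using chain_lo_le_hi[OF finite_C assms(2,3) that] by blast
  have nonempty: "\<forall>i<b. lo v i \<le> hi v i" for v
    using lo_le_hi by blast
  have separated: "box_set b (lo u) (hi u) \<inter> box_set b (lo v) (hi v) = {}"
    if "u \<in> V" "(u, v) \<in> r" "u \<noteq> v" for u v
  proof -
    have "hi u (f u) < lo v (f u)"
      unfolding lo_def hi_def
      using chain_hi_less_lo[OF finite_C assms(2,3) chains[folded C_def] that(2,3)] that(1)
      by (simp add: C_def)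
    then have "\<not> (\<forall>i<b. lo v i \<le> hi u i)"
      using colours[OF that(1)] by (meson not_le)
    then show ?thesis
      using box_set_Int_nonempty_iff[OF nonempty nonempty] by blast
  qed
  have "E u v \<longleftrightarrow> box_set b (lo u) (hi u) \<inter> box_set b (lo v) (hi v) \<noteq> {}"
    if "u \<in> V" "v \<in> V" "u \<noteq> v" for u v
  proof
    assume "E u v"
    then have "(u, v) \<notin> r" "(v, u) \<notin> r"
      using incomparable that by auto
    then show "box_set b (lo u) (hi u) \<inter> box_set b (lo v) (hi v) \<noteq> {}"
      using box_set_Int_nonempty_iff[OF nonempty nonempty] lo_le_hi by blast
  next
    assume "box_set b (lo u) (hi u) \<inter> box_set b (lo v) (hi v) \<noteq> {}"
    then show "E u v"
      using incomparable separated that by (metis Int_commute)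
  qed
  then show ?thesis
    unfolding box_representable_def using nonempty by blast
qed

theorem theorem8:
  fixes V :: "'a set" and E :: "'a \<Rightarrow> 'a \<Rightarrow> bool"
  assumes "simple_graph V E"
    and "cocomparability_graph V E"
  shows "boxicity V E \<le> 2 * max_degree V E + 1"
proof -
  have "finite V"
    using assms(1) unfolding simple_graph_def by blast
  obtain r where po: "partial_order_on V r"
    and incomparable: "\<And>u v. u \<in> V \<Longrightarrow> v \<in> V \<Longrightarrow> u \<noteq> v \<Longrightarrow> E u v \<longleftrightarrow> (u, v) \<notin> r \<and> (v, u) \<notin> r"
    using assms(2)
    unfolding cocomparability_graph_def comparability_graph_def graph_complement_def by blast
  obtain f :: "'a \<Rightarrow> nat" where f_le: "\<forall>v\<in>V. f v \<le> max_degree V E"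
    and f_proper: "\<forall>u\<in>V. \<forall>v\<in>V. E u v \<longrightarrow> f u \<noteq> f v"
    using simple_graph_greedy_colouring[OF assms(1) degree_le_max_degree[OF \<open>finite V\<close>]] by blast
  have "{v\<in>V. f v = i} \<in> Chains r" for i
    using f_proper incomparable partial_order_onD(1)[OF po]
    unfolding Chains_def refl_on_def by blast
  then have "box_representable V E (max_degree V E + 1)"
    using box_representable_by_chain_colouring[OF \<open>finite V\<close> partial_order_onD(2,3)[OF po]
        incomparable, of f] f_le
    by (simp add: less_Suc_eq_le)
  then have "boxicity V E \<le> max_degree V E + 1"
    unfolding boxicity_def by (rule Least_le)
  then show ?thesis by simp
qed

end
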